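(* Consider an insertion-only edge stream and the reservoir sample $\mathcal{S}$ of capacity $M\ge 6$ (as described in the context). Let $\lambda=\{\ell_1,\ell_2,\ell_3\}$ and $\gamma=\{g_1,g_2,g_3\}$ be two triangles sharing no edge, where the edges of each are numbered in their order of arrival on the stream, and assume the last edge of $\lambda$ arrives on the stream before the last edge of $\gamma$, i.e. $t_\lambda<t_\gamma$. Let $D_\lambda$ be the event that $\ell_1$ and $\ell_2$ are both in $\mathcal{S}$ at the end of time step $t_\lambda-1$, and $D_\gamma$ the event that $g_1$ and $g_2$ are both in $\mathcal{S}$ at the end of time step $t_\gamma-1$. Then \[ \Pr(D_\gamma\mid D_\lambda)\le\Pr(D_\gamma). \]
   Context: An insertion-only edge stream: at each time step $t=1,2,\dots$ an edge $e_t$ between two distinct vertices arrives, which is not already present. A triangle is a set of three edges $\{\{u,v\},\{v,w\},\{w,u\}\}$ with $u,v,w$ distinct. For a triangle $\lambda$, $t_\lambda$ is the time step at which its last edge arrives. Reservoir sampling with capacity $M$: the sample $\mathcal{S}$ starts empty; at time $t$, if $t\le M$ the edge $e_t$ is inserted; if $t>M$, with probability $M/t$ an edge chosen uniformly at random from $\mathcal{S}$ is removed and $e_t$ is inserted, otherwise $\mathcal{S}$ is unchanged. *)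

theory Defs
  imports "HOL-Probability.Probability"
begin

definition is_triangle :: "'v set set \<Rightarrow> bool" where
  "is_triangle T \<longleftrightarrow>
     (\<exists>u v w. u \<noteq> v \<and> v \<noteq> w \<and> u \<noteq> w \<and> T = {{u,v},{v,w},{w,u}})"

definition reservoir_step ::
  "nat \<Rightarrow> (nat \<Rightarrow> 'v set) \<Rightarrow> nat \<Rightarrow> 'v set set \<Rightarrow> 'v set set pmf" where
  "reservoir_step M e t S =
     (if t \<le> M then return_pmf (insert (e t) S)
      else bind_pmf (bernoulli_pmf (real M / real t))
             (\<lambda>b. if b then map_pmf (\<lambda>x. insert (e t) (S - {x})) (pmf_of_set S)
                  else return_pmf S))"

text \<open>Joint distribution of the history of the sample: the list
  [S_0, S_1, ..., S_n], where S_k is the sample at the end of time step k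
  (S_0 = {} is the initial empty sample).\<close>
fun reservoir_hist ::
  "nat \<Rightarrow> (nat \<Rightarrow> 'v set) \<Rightarrow> nat \<Rightarrow> 'v set set list pmf" where
  "reservoir_hist M e 0 = return_pmf [{}]"
| "reservoir_hist M e (Suc n) =
     bind_pmf (reservoir_hist M e n)
       (\<lambda>h. map_pmf (\<lambda>S. h @ [S]) (reservoir_step M e (Suc n) (last h)))"

end

(*
  Conditioned on B - {e t} being in the sample
  S_(t-1), the event B \<subseteq> S_t has a probability incl_factor t B that depends only on |B| and on
  whether e t \<in> B, and this factor is submultiplicative over disjoint sets.  Induction on time
  then gives P(X \<union> Y \<subseteq> S_n) \<le> P(X \<subseteq> S_n) P(Y \<subseteq> S_n) for disjoint X, Y.
  Tracing {g1, g2} \<subseteq> S_(t_gamma - 1) back to time s = t_lambda - 1 multiplies by a constant c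
  and leaves the part A of {g1, g2} that arrived before s, so
  P(D_gamma \<and> D_lambda) = c P(L \<union> A \<subseteq> S_s) \<le> c P(A \<subseteq> S_s) P(L \<subseteq> S_s) = P(D_gamma) P(D_lambda)
  with L = {l1, l2}.
*)
theory Submission
  imports Defs
begin

lemma measure_bind_pmf:
  "measure_pmf.prob (bind_pmf p f) A = (\<integral>x. measure_pmf.prob (f x) A \<partial>p)"
  unfolding measure_pmf_bind
  by (subst measure_pmf.measure_bind[where N="count_space UNIV"]) (auto simp: measure_subprob)

lemma fresh_edge_notin_earlier:
  assumes "inj_on e {1..}"
  shows "e (Suc n) \<notin> e ` {1..n}"
  using inj_on_image_mem_iff[OF assms, of "Suc n" "{1..n}"] by auto

lemma reservoir_step_invariant:
  assumes "M \<ge> 1" "finite S0" "card S0 = min n M" "e (Suc n) \<notin> S0"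
    and "S \<in> set_pmf (reservoir_step M e (Suc n) S0)"
  shows "finite S \<and> card S = min (Suc n) M \<and> S \<subseteq> insert (e (Suc n)) S0"
proof (cases "Suc n \<le> M")
  case True
  then show ?thesis using assms by (auto simp: reservoir_step_def)
next
  case False
  then have card_S0: "card S0 = M" using assms(3) by auto
  then have "card S0 > 0" using assms(1) by auto
  then have "S0 \<noteq> {}" by auto
  moreover have "real M / real (Suc n) \<le> 1" using False by auto
  ultimately obtain x where "S = S0 \<or> (x \<in> S0 \<and> S = insert (e (Suc n)) (S0 - {x}))"
    using assms(2,5) False by (auto simp: reservoir_step_def split: if_splits)
  then show ?thesis
    using assms(2,4) card_S0 False \<open>card S0 > 0\<close> by (auto simp: card_Diff_singleton)
qed

lemma reservoir_hist_invariant: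
  assumes "M \<ge> 1" "inj_on e {1..}" "h \<in> set_pmf (reservoir_hist M e n)"
  shows "length h = Suc n \<and> finite (h!n) \<and> card (h!n) = min n M \<and> h!n \<subseteq> e ` {1..n}"
  using assms(3)
proof (induction n arbitrary: h)
  case 0
  then show ?case by auto
next
  case (Suc n)
  then obtain h0 S where h0: "h0 \<in> set_pmf (reservoir_hist M e n)"
    and S: "S \<in> set_pmf (reservoir_step M e (Suc n) (last h0))" and h: "h = h0 @ [S]"
    by auto
  have IH: "length h0 = Suc n" "finite (h0!n)" "card (h0!n) = min n M" "h0!n \<subseteq> e ` {1..n}"
    using Suc.IH[OF h0] by auto
  have "last h0 = h0!n"
    using IH(1) by (cases h0 rule: rev_cases) auto
  moreover have "e (Suc n) \<notin> h0!n"
    using IH(4) fresh_edge_notin_earlier[OF assms(2)] by blast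
  ultimately have "finite S \<and> card S = min (Suc n) M \<and> S \<subseteq> insert (e (Suc n)) (h0!n)"
    using reservoir_step_invariant[OF assms(1) IH(2,3)] S by simp
  moreover have "{1..Suc n} = insert (Suc n) {1..n}" by auto
  ultimately show ?case using h IH by (auto simp: nth_append)
qed

text \<open>The conditional probability of \<open>B \<subseteq> S\<^sub>t\<close> given \<open>B - {e t} \<subseteq> S\<^sub>t\<^sub>-\<^sub>1\<close>. Once the
  sample is full (\<open>t > M\<close>) it is \<open>(M/t) \<cdot> (M + 1 - |B|)/M\<close> if \<open>e t \<in> B\<close> (the evicted edge
  must avoid the old part of \<open>B\<close>), and \<open>1 - M/t + (M/t) \<cdot> (M - |B|)/M\<close> otherwise.\<close>
definition incl_factor :: "nat \<Rightarrow> (nat \<Rightarrow> 'v set) \<Rightarrow> nat \<Rightarrow> 'v set set \<Rightarrow> real" where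
  "incl_factor M e t B =
     (if t \<le> M then 1
      else if e t \<in> B then real (M + 1 - card B) / real t
      else real (t - card B) / real t)"

lemma incl_factor_nonneg: "incl_factor M e t B \<ge> 0"
  by (simp add: incl_factor_def)

lemma measure_reservoir_step_full:
  assumes "M \<ge> 1" "M < t" "finite S0" "card S0 = M"
  shows "measure_pmf.prob (reservoir_step M e t S0) {S. B \<subseteq> S}
     = real (card {x \<in> S0. B \<subseteq> insert (e t) (S0 - {x})}) / real t
       + (if B \<subseteq> S0 then 1 else 0) * (1 - real M / real t)"
proof -
  have "S0 \<noteq> {}" and "real M / real t \<le> 1" using assms by auto
  then show ?thesis
    using assms by (simp add: reservoir_step_def measure_bind_pmf measure_pmf_of_set vimage_def Int_def)
qed

lemma measure_reservoir_step_superset: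
  assumes "M \<ge> 1" "finite S0" "card S0 = min n M" "e (Suc n) \<notin> S0" "finite B"
  shows "measure_pmf.prob (reservoir_step M e (Suc n) S0) {S. B \<subseteq> S}
         = incl_factor M e (Suc n) B * (if B - {e (Suc n)} \<subseteq> S0 then 1 else 0)"
proof (cases "Suc n \<le> M")
  case True
  have "B \<subseteq> insert (e (Suc n)) S0 \<longleftrightarrow> B - {e (Suc n)} \<subseteq> S0" by blast
  with True show ?thesis by (simp add: reservoir_step_def incl_factor_def)
next
  case full: False
  let ?t = "Suc n" and ?a = "e (Suc n)"
  let ?good = "{x \<in> S0. B \<subseteq> insert ?a (S0 - {x})}"
  have card_S0: "card S0 = M" using assms(3) full by auto
  note prob = measure_reservoir_step_full[OF assms(1) _ assms(2) card_S0, of ?t e B]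
  show ?thesis
  proof (cases "B - {?a} \<subseteq> S0")
    case False
    then have "?good = {}" "\<not> B \<subseteq> S0" by auto
    with prob full show ?thesis by (simp add: False)
  next
    case True
    define k where "k = card (B - {?a})"
    have "?good = S0 - (B - {?a})" using True assms(4) by blast
    moreover have "k \<le> M" unfolding k_def using True assms(2) card_S0 card_mono by metis
    moreover have "card (S0 - (B - {?a})) = M - k"
      using True assms(2) card_S0 unfolding k_def by (metis card_Diff_subset finite_subset)
    ultimately have good: "real (card ?good) = real M - real k" by simp
    show ?thesis
    proof (cases "?a \<in> B")
      case True
      then have "card B = Suc k" "\<not> B \<subseteq> S0" unfolding k_def using assms(4,5)
        by (auto simp only: card_Suc_Diff1)
      with prob good \<open>k \<le> M\<close> \<open>B - {?a} \<subseteq> S0\<close> full True show ?thesis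
        by (simp add: incl_factor_def)
    next
      case False
      then have "card B = k" "B \<subseteq> S0" unfolding k_def using \<open>B - {?a} \<subseteq> S0\<close> by auto
      moreover have "(real M - real k) / real ?t + (1 - real M / real ?t) = real (?t - k) / real ?t"
        using \<open>k \<le> M\<close> full by (simp add: of_nat_diff diff_divide_distrib add_divide_distrib)
      ultimately show ?thesis using prob good full False by (simp add: incl_factor_def)
    qed
  qed
qed

lemma measure_reservoir_hist_Suc:
  assumes "M \<ge> 1" "inj_on e {1..}" "finite B"
  shows "measure_pmf.prob (reservoir_hist M e (Suc n)) {h. E (take (Suc n) h) \<and> B \<subseteq> h ! Suc n}
       = incl_factor M e (Suc n) B
         * measure_pmf.prob (reservoir_hist M e n) {h. E h \<and> B - {e (Suc n)} \<subseteq> h ! n}"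
proof -
  let ?H = "reservoir_hist M e n" and ?a = "e (Suc n)"
  let ?F = "{h. E (take (Suc n) h) \<and> B \<subseteq> h ! Suc n}" and ?G = "{h. E h \<and> B - {?a} \<subseteq> h ! n}"
  have "measure_pmf.prob (reservoir_step M e (Suc n) (last h)) ((\<lambda>S. h @ [S]) -` ?F)
        = incl_factor M e (Suc n) B * indicator ?G h" if h: "h \<in> set_pmf ?H" for h
  proof -
    note inv = reservoir_hist_invariant[OF assms(1,2) h]
    have "last h = h ! n"
      using inv by (cases h rule: rev_cases) auto
    moreover have "(\<lambda>S. h @ [S]) -` ?F = {S. E h \<and> B \<subseteq> S}"
      using inv by (auto simp: nth_append)
    moreover have "?a \<notin> h ! n"
      using inv fresh_edge_notin_earlier[OF assms(2)] by blast
    ultimately show ?thesis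
      using measure_reservoir_step_superset[OF assms(1) _ _ _ assms(3)] inv
      by (cases "E h") (auto simp: indicator_def)
  qed
  then have "(\<integral>h. measure_pmf.prob (reservoir_step M e (Suc n) (last h)) ((\<lambda>S. h @ [S]) -` ?F) \<partial>?H)
        = (\<integral>h. incl_factor M e (Suc n) B * indicator ?G h \<partial>?H)"
    by (intro integral_cong_AE) (auto simp: AE_measure_pmf_iff)
  then show ?thesis by (simp add: measure_bind_pmf)
qed

definition incl_prob :: "nat \<Rightarrow> (nat \<Rightarrow> 'v set) \<Rightarrow> nat \<Rightarrow> 'v set set \<Rightarrow> real" where
  "incl_prob M e n B = measure_pmf.prob (reservoir_hist M e n) {h. B \<subseteq> h ! n}"

lemma incl_prob_Suc:
  assumes "M \<ge> 1" "inj_on e {1..}" "finite B"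
  shows "incl_prob M e (Suc n) B = incl_factor M e (Suc n) B * incl_prob M e n (B - {e (Suc n)})"
  using measure_reservoir_hist_Suc[OF assms, where E = "\<lambda>_. True"] by (simp add: incl_prob_def)

lemma truncated_fraction_submult:
  fixes m t x y :: nat
  assumes "m \<le> t"
  shows "real (m - (x + y)) / real t \<le> real (m - x) / real t * (real (t - y) / real t)"
proof (cases "x + y \<le> m \<and> t > 0")
  case True
  have "real (m - x) * real y \<le> real t * real y"
    using assms by (intro mult_right_mono) auto
  then have "real (m - (x + y)) * real t \<le> real (m - x) * real (t - y)"
    using True assms by (simp add: of_nat_diff algebra_simps)
  moreover have "real t > 0" using True assms by auto
  ultimately show ?thesis by (simp add: field_simps)
next
  case False
  then have "real (m - (x + y)) / real t = 0" by auto
  moreover have "0 \<le> real (m - x) / real t * (real (t - y) / real t)" by simp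
  ultimately show ?thesis by linarith
qed

lemma incl_factor_Un_le:
  assumes "finite X" "finite Y" "X \<inter> Y = {}"
  shows "incl_factor M e t (X \<union> Y) \<le> incl_factor M e t X * incl_factor M e t Y"
proof -
  have card_Un: "card (X \<union> Y) = card X + card Y" using assms card_Un_disjoint by blast
  consider "t \<le> M" | "M < t" "e t \<notin> X" "e t \<notin> Y" | "M < t" "e t \<in> X" "e t \<notin> Y"
    | "M < t" "e t \<notin> X" "e t \<in> Y"
    using assms(3) by force
  then show ?thesis
  proof cases
    case 2
    then show ?thesis
      using truncated_fraction_submult[of t t "card X" "card Y"] by (simp add: incl_factor_def card_Un)
  next
    case 3
    then show ?thesis
      using truncated_fraction_submult[of "M + 1" t "card X" "card Y"] by (simp add: incl_factor_def card_Un)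
  next
    case 4
    then show ?thesis
      using truncated_fraction_submult[of "M + 1" t "card Y" "card X"]
      by (simp add: incl_factor_def card_Un add.commute mult.commute)
  qed (simp add: incl_factor_def)
qed

lemma incl_prob_Un_le:
  assumes "M \<ge> 1" "inj_on e {1..}" "finite X" "finite Y" "X \<inter> Y = {}"
  shows "incl_prob M e n (X \<union> Y) \<le> incl_prob M e n X * incl_prob M e n Y"
  using assms(3-5)
proof (induction n arbitrary: X Y)
  case 0
  then show ?case by (simp add: incl_prob_def indicator_def)
next
  case (Suc n)
  let ?a = "e (Suc n)" and ?f = "incl_factor M e (Suc n)" and ?p = "incl_prob M e n"
  have "incl_prob M e (Suc n) (X \<union> Y) = ?f (X \<union> Y) * ?p ((X - {?a}) \<union> (Y - {?a}))"
    using incl_prob_Suc[OF assms(1,2)] Suc.prems by (simp add: Un_Diff)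
  also have "\<dots> \<le> ?f (X \<union> Y) * (?p (X - {?a}) * ?p (Y - {?a}))"
    using Suc.IH[of "X - {?a}" "Y - {?a}"] Suc.prems by (intro mult_left_mono incl_factor_nonneg) auto
  also have "\<dots> \<le> (?f X * ?f Y) * (?p (X - {?a}) * ?p (Y - {?a}))"
    using incl_factor_Un_le[OF Suc.prems] by (intro mult_right_mono) (auto simp: incl_prob_def)
  also have "\<dots> = incl_prob M e (Suc n) X * incl_prob M e (Suc n) Y"
    using incl_prob_Suc[OF assms(1,2)] Suc.prems by simp
  finally show ?case .
qed

lemma measure_reservoir_hist_joint_incl:
  assumes "M \<ge> 1" "inj_on e {1..}" "s \<le> T" "finite B"
  shows "\<exists>c\<ge>0. \<forall>X. measure_pmf.prob (reservoir_hist M e T) {h. X \<subseteq> h ! s \<and> B \<subseteq> h ! T}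
                   = c * incl_prob M e s (X \<union> (B - e ` {s<..T}))"
  using assms(3,4)
proof (induction T arbitrary: B rule: dec_induct)
  case base
  have "{h. X \<subseteq> h ! s \<and> B \<subseteq> h ! s} = {h. X \<union> (B - e ` {s<..s}) \<subseteq> h ! s}" for X by auto
  then show ?case by (intro exI[of _ 1]) (simp add: incl_prob_def)
next
  case (step T)
  let ?a = "e (Suc T)"
  obtain c where "c \<ge> 0" and c: "\<And>X. measure_pmf.prob (reservoir_hist M e T) {h. X \<subseteq> h ! s \<and> B - {?a} \<subseteq> h ! T}
      = c * incl_prob M e s (X \<union> (B - {?a} - e ` {s<..T}))"
    using step.IH[of "B - {?a}"] step.prems by auto
  have "{s<..Suc T} = insert (Suc T) {s<..T}" using step.hyps by auto
  then have B_rest: "B - {?a} - e ` {s<..T} = B - e ` {s<..Suc T}" by auto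
  have "measure_pmf.prob (reservoir_hist M e (Suc T)) {h. X \<subseteq> h ! s \<and> B \<subseteq> h ! Suc T}
      = (incl_factor M e (Suc T) B * c) * incl_prob M e s (X \<union> (B - e ` {s<..Suc T}))" for X
  proof -
    have "{h. X \<subseteq> h ! s \<and> B \<subseteq> h ! Suc T} = {h. X \<subseteq> take (Suc T) h ! s \<and> B \<subseteq> h ! Suc T}"
      using step.hyps by simp
    then show ?thesis
      using measure_reservoir_hist_Suc[OF assms(1,2) step.prems, where E = "\<lambda>h. X \<subseteq> h ! s"]
      by (simp add: c B_rest)
  qed
  with \<open>c \<ge> 0\<close> show ?case by (metis incl_factor_nonneg mult_nonneg_nonneg)
qed

lemma measure_reservoir_hist_incl_earlier:
  assumes "M \<ge> 1" "inj_on e {1..}" "s \<le> T"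
  shows "measure_pmf.prob (reservoir_hist M e T) {h. X \<subseteq> h ! s} = incl_prob M e s X"
proof -
  obtain c where c: "\<And>X. measure_pmf.prob (reservoir_hist M e T) {h. X \<subseteq> h ! s} = c * incl_prob M e s X"
    using measure_reservoir_hist_joint_incl[OF assms, of "{}"] by auto
  from c[of "{}"] have "c = 1" by (simp add: incl_prob_def)
  with c show ?thesis by simp
qed

lemma reservoir_hist_incl_neg_correlated:
  assumes "M \<ge> 1" "inj_on e {1..}" "s \<le> T" "finite L" "finite G" "L \<inter> G = {}"
  shows "measure_pmf.prob (reservoir_hist M e T) {h. L \<subseteq> h ! s \<and> G \<subseteq> h ! T}
         \<le> measure_pmf.prob (reservoir_hist M e T) {h. L \<subseteq> h ! s}
           * measure_pmf.prob (reservoir_hist M e T) {h. G \<subseteq> h ! T}"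
proof -
  let ?H = "reservoir_hist M e T" and ?p = "incl_prob M e s" and ?A = "G - e ` {s<..T}"
  obtain c where "c \<ge> 0"
    and c: "\<And>X. measure_pmf.prob ?H {h. X \<subseteq> h ! s \<and> G \<subseteq> h ! T} = c * ?p (X \<union> ?A)"
    using measure_reservoir_hist_joint_incl[OF assms(1-3,5)] by blast
  have "?p (L \<union> ?A) \<le> ?p L * ?p ?A"
    using incl_prob_Un_le[OF assms(1,2,4)] assms(5,6) by blast
  then have "c * ?p (L \<union> ?A) \<le> ?p L * (c * ?p ?A)"
    using \<open>c \<ge> 0\<close> by (metis mult.left_commute mult_left_mono)
  then show ?thesis
    using c[of L] c[of "{}"] measure_reservoir_hist_incl_earlier[OF assms(1-3)] by simp
qed

lemma (in prob_space) cond_prob_le_of_neg_correlated: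
  assumes "prob {x \<in> space M. P x \<and> Q x} \<le> prob {x \<in> space M. Q x} * prob {x \<in> space M. P x}"
  shows "cond_prob M P Q \<le> prob {x \<in> space M. P x}"
proof (cases "prob {x \<in> space M. Q x} = 0")
  case False
  with assms show ?thesis
    by (simp add: cond_prob_def divide_le_eq zero_less_measure_iff mult.commute)
qed (simp add: cond_prob_def)

theorem lemma4p14:
  fixes M :: nat and e :: "nat \<Rightarrow> 'v set"
    and a1 a2 a3 b1 b2 b3 :: nat
  assumes M: "M \<ge> 6"
    and edges: "\<forall>t\<ge>1. \<exists>u v. u \<noteq> v \<and> e t = {u, v}"
    and new_edges: "inj_on e {1..}"
    and a_order: "1 \<le> a1" "a1 < a2" "a2 < a3"
    and b_order: "1 \<le> b1" "b1 < b2" "b2 < b3"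
    and tri_lam: "is_triangle {e a1, e a2, e a3}"
    and tri_gam: "is_triangle {e b1, e b2, e b3}"
    and no_shared: "{e a1, e a2, e a3} \<inter> {e b1, e b2, e b3} = {}"
    and last_order: "a3 < b3"
  shows "cond_prob (measure_pmf (reservoir_hist M e (b3 - 1)))
           (\<lambda>h. e b1 \<in> h ! (b3 - 1) \<and> e b2 \<in> h ! (b3 - 1))
           (\<lambda>h. e a1 \<in> h ! (a3 - 1) \<and> e a2 \<in> h ! (a3 - 1))
         \<le> measure_pmf.prob (reservoir_hist M e (b3 - 1))
             {h. e b1 \<in> h ! (b3 - 1) \<and> e b2 \<in> h ! (b3 - 1)}"
  \<comment> \<open>Only \<open>M \<ge> 1\<close>, the injectivity of the stream and the disjointness of \<open>{\<ell>\<^sub>1, \<ell>\<^sub>2}\<close> and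
    \<open>{g\<^sub>1, g\<^sub>2}\<close> are needed.\<close>
proof -
  define s where "s = a3 - 1"
  define T where "T = b3 - 1"
  have "{e a1, e a2} \<inter> {e b1, e b2} = {}" using no_shared by blast
  moreover have "M \<ge> 1" "s \<le> T" using M last_order by (simp_all add: s_def T_def)
  ultimately have "measure_pmf.prob (reservoir_hist M e T)
        {h. (e a1 \<in> h ! s \<and> e a2 \<in> h ! s) \<and> e b1 \<in> h ! T \<and> e b2 \<in> h ! T}
      \<le> measure_pmf.prob (reservoir_hist M e T) {h. e a1 \<in> h ! s \<and> e a2 \<in> h ! s}
        * measure_pmf.prob (reservoir_hist M e T) {h. e b1 \<in> h ! T \<and> e b2 \<in> h ! T}"
    using reservoir_hist_incl_neg_correlated[OF _ new_edges,
        where s = s and T = T and L = "{e a1, e a2}" and G = "{e b1, e b2}"]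
    by simp
  then show ?thesis
    unfolding s_def[symmetric] T_def[symmetric]
    using measure_pmf.cond_prob_le_of_neg_correlated[where M = "reservoir_hist M e T"
        and P = "\<lambda>h. e b1 \<in> h ! T \<and> e b2 \<in> h ! T" and Q = "\<lambda>h. e a1 \<in> h ! s \<and> e a2 \<in> h ! s"]
    by (simp add: conj_commute mult.commute)
qed

end
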